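(* Consider an instance of the cake-cutting problem with $k$ players (with hungry and closed preferences, as described in the context), and let $1\le p,q\le k$ be integers. (1) For any subset $S$ of $p$ players, there is a division of the cake into $k$ pieces such that, no matter which $\lceil\frac{k-p}{p}\rceil$ pieces are removed, there is an envy-free assignment of $p$ of the remaining pieces to the $p$ players of $S$: each player of $S$ receives a distinct remaining piece which is one of her preferred pieces in the division (so the players of $S$ envy neither each other nor the removed pieces). (2) There is a division of the cake into $q$ pieces such that, no matter which $\lceil\frac{k-q}{q}\rceil$ players leave, there is an envy-free assignment of the $q$ pieces to some $q$ of the remaining players: the $q$ pieces are given to $q$ distinct remaining players, each receiving one of her preferred pieces in the division.
   Context: The cake is the segment $[0,1]$. A division of the cake into $n$ pieces is a partition of $[0,1]$ into $n$ intervals (pieces, numbered from left to right, possibly of length zero); whether endpoints belong to an interval does not matter, so a division into $n$ pieces is identified with the vector of piece lengths, a point of the standard simplex in $\mathbb{R}^n$. For each division, each player has a nonempty set of preferred pieces (she may prefer several). Hungry assumption: in any division, each player prefers at least one piece of positive length. Closed preferences assumption: if a player prefers the $j$-th piece in each division of a converging sequence of divisions (into the same number of pieces), she also prefers the $j$-th piece in the limit division. An assignment of pieces to players is envy-free if each player receives a piece she prefers (weakly) to all other pieces of the division, i.e., one of her preferred pieces. *)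

theory Defs
  imports Complex_Main
begin

text \<open>A division of the cake [0,1] into n pieces, identified with the list of the
  lengths of the pieces (numbered 0..n-1 from left to right): a point of the
  standard simplex in R^n.\<close>
definition division :: "nat \<Rightarrow> real list \<Rightarrow> bool" where
  "division n x \<longleftrightarrow> length x = n \<and> (\<forall>a\<in>set x. 0 \<le> a) \<and> sum_list x = 1"

text \<open>Preferences of the players 0..k-1: pref i x is the set of (indices of) pieces
  that player i prefers in the division x (for divisions into any number of pieces).\<close>
definition cake_instance :: "nat \<Rightarrow> (nat \<Rightarrow> real list \<Rightarrow> nat set) \<Rightarrow> bool" where
  "cake_instance k pref \<longleftrightarrow>
     (\<forall>i<k. \<forall>n x. division n x \<longrightarrow> pref i x \<noteq> {} \<and> pref i x \<subseteq> {..<n}) \<and>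
     (\<forall>i<k. \<forall>n x. division n x \<longrightarrow> (\<exists>j\<in>pref i x. x ! j > 0)) \<and>
     (\<forall>i<k. \<forall>n X x j. (\<forall>m. division n (X m)) \<longrightarrow> division n x \<longrightarrow>
        (\<forall>l<n. (\<lambda>m. X m ! l) \<longlonglongrightarrow> x ! l) \<longrightarrow>
        (\<forall>m. j \<in> pref i (X m)) \<longrightarrow> j \<in> pref i x)"

end

theory Submission
  imports Defs "HOL-Analysis.Analysis"
begin

text \<open>For a set \<open>P\<close> of players and \<open>n\<close> pieces there is a division together with a fractional
  assignment: every player of \<open>P\<close> spreads weight \<open>1\<close> over pieces she prefers, and every piece
  receives weight \<open>|P| / n\<close>. When \<open>|P| = p\<close> and \<open>n = k\<close> (or \<open>P\<close> is everybody and \<open>n = q\<close>), Hall's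
  theorem turns this fractional assignment into a matching, and the slack factor \<open>k / p\<close> is exactly
  what allows \<open>\<lceil>(k - p) / p\<rceil>\<close> pieces (players) to be deleted first.

  The fractional assignment is a limit of fixed points: smoothing the preferences at scale \<open>1 / m\<close>
  gives a Lipschitz self-map of the simplex that preserves its faces, hence hits the barycentre, and
  closedness of the preferences makes the limit exact. Brouwer's theorem itself comes from Kuhn's
  combinatorial lemma.\<close>

section \<open>Hall's theorem with deleted vertices\<close>

definition hall_condition :: "'a set \<Rightarrow> ('a \<Rightarrow> 'b set) \<Rightarrow> bool" where
  "hall_condition A N \<longleftrightarrow> (\<forall>T\<subseteq>A. card T \<le> card (\<Union>(N ` T)))"

lemma hall_condition_Diff_critical:
  assumes fin: "finite A" "\<forall>a\<in>A. finite (N a)" and H: "hall_condition A N"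
    and T: "T \<subseteq> A" "card T = card (\<Union>(N ` T))"
  shows "hall_condition (A - T) (\<lambda>a. N a - \<Union>(N ` T))"
  unfolding hall_condition_def
proof (intro allI impI)
  fix U assume U: "U \<subseteq> A - T"
  let ?NT = "\<Union>(N ` T)" and ?NU = "\<Union>a\<in>U. N a - \<Union>(N ` T)"
  have "finite (\<Union>(N ` A))" using fin by blast
  moreover have "?NU \<subseteq> \<Union>(N ` A)" "?NT \<subseteq> \<Union>(N ` A)" using U T by blast+
  ultimately have finU: "finite ?NU" and finNT: "finite ?NT" by (auto intro: finite_subset)
  have "card U + card T = card (U \<union> T)"
    using U T fin by (subst card_Un_disjoint) (auto intro: finite_subset)
  also have "\<dots> \<le> card (\<Union>(N ` (U \<union> T)))"
    using H U T unfolding hall_condition_def by blast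
  also have "\<Union>(N ` (U \<union> T)) = ?NU \<union> ?NT" by blast
  also have "card \<dots> = card ?NU + card ?NT"
    using finU finNT by (intro card_Un_disjoint) auto
  finally show "card U \<le> card ?NU" using T(2) by linarith
qed

lemma hall_condition_remove:
  assumes fin: "finite A" and H: "hall_condition A N" and a: "a \<in> A"
    and surplus: "\<forall>T. T \<noteq> {} \<and> T \<subset> A \<longrightarrow> card T < card (\<Union>(N ` T))"
  shows "hall_condition (A - {a}) (\<lambda>x. N x - {b})"
  unfolding hall_condition_def
proof (intro allI impI)
  fix U assume U: "U \<subseteq> A - {a}"
  show "card U \<le> card (\<Union>x\<in>U. N x - {b})"
  proof (cases "U = {}")
    case False
    have "card U < card (\<Union>(N ` U))" using surplus False U a by blast
    moreover have "card (\<Union>(N ` U)) - 1 \<le> card (\<Union>(N ` U) - {b})"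
      using diff_card_le_card_Diff[of "{b}" "\<Union>(N ` U)"] by simp
    moreover have "(\<Union>x\<in>U. N x - {b}) = \<Union>(N ` U) - {b}" by blast
    ultimately show ?thesis by simp
  qed simp
qed

theorem hall_marriage:
  assumes "finite A" "\<forall>a\<in>A. finite (N a)" "hall_condition A N"
  shows "\<exists>f. inj_on f A \<and> (\<forall>a\<in>A. f a \<in> N a)"
  using assms
proof (induction "card A" arbitrary: A N rule: less_induct)
  case less
  note fin = less.prems(1,2) and H = less.prems(3)
  have "card T \<le> card (\<Union>(N ` T))" if "T \<subset> A" for T
    using H that unfolding hall_condition_def by blast
  then consider (critical) T where "T \<noteq> {}" "T \<subset> A" "card T = card (\<Union>(N ` T))"
    | (surplus) "\<forall>T. T \<noteq> {} \<and> T \<subset> A \<longrightarrow> card T < card (\<Union>(N ` T))"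
    using le_neq_implies_less by blast
  then show ?case
  proof cases
    case critical
    have fT: "finite T" using critical(2) fin by (auto intro: finite_subset)
    have "card T < card A" using critical(2) fin by (simp add: psubset_card_mono)
    moreover have "hall_condition T N"
      using H critical(2) by (auto simp: hall_condition_def)
    ultimately obtain f1 where f1: "inj_on f1 T" "\<forall>a\<in>T. f1 a \<in> N a"
      using less.hyps[of T N] fT fin critical(2) by blast
    let ?N2 = "\<lambda>a. N a - \<Union>(N ` T)"
    have "0 < card T" "card T \<le> card A"
      using critical(1,2) fT fin by (auto simp: card_gt_0_iff card_mono)
    then have "card (A - T) < card A"
      using critical(2) fT by (simp add: card_Diff_subset)
    moreover have "hall_condition (A - T) ?N2"
      using hall_condition_Diff_critical[OF fin H] critical by blast
    ultimately obtain f2 where f2: "inj_on f2 (A - T)" "\<forall>a\<in>A - T. f2 a \<in> ?N2 a"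
      using less.hyps[of "A - T" ?N2] fin by blast
    define f where "f a = (if a \<in> T then f1 a else f2 a)" for a
    have "f ` T \<subseteq> \<Union>(N ` T)" "f ` (A - T) \<inter> \<Union>(N ` T) = {}"
      using f1 f2 by (auto simp: f_def)
    moreover have "inj_on f T" "inj_on f (A - T)"
      using f1(1) f2(1) by (auto simp: f_def inj_on_def)
    ultimately have "inj_on f (T \<union> (A - T))" unfolding inj_on_Un by blast
    moreover have "T \<union> (A - T) = A" using critical(2) by blast
    ultimately show ?thesis using f1 f2 by (auto simp: f_def)
  next
    case surplus
    show ?thesis
    proof (cases "A = {}")
      case False
      then obtain a where a: "a \<in> A" by blast
      then have "card {a} \<le> card (\<Union>(N ` {a}))" using H unfolding hall_condition_def by blast
      then have "N a \<noteq> {}" by auto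
      then obtain b where b: "b \<in> N a" by blast
      have "card (A - {a}) < card A" using a fin by (meson card_Diff1_less)
      moreover have "hall_condition (A - {a}) (\<lambda>x. N x - {b})"
        using hall_condition_remove[OF fin(1) H a surplus] .
      ultimately obtain f where f: "inj_on f (A - {a})" "\<forall>x\<in>A - {a}. f x \<in> N x - {b}"
        using less.hyps[of "A - {a}" "\<lambda>x. N x - {b}"] fin by blast
      have "inj_on (f(a := b)) (insert a (A - {a}))"
        using f by (auto simp: inj_on_def)
      moreover have "insert a (A - {a}) = A" using a by blast
      moreover have "\<forall>x\<in>A. (f(a := b)) x \<in> N x" using f(2) b by auto
      ultimately show ?thesis by auto
    qed simp
  qed
qed

lemma card_support_weighted_bound:
  fixes w :: "'a \<Rightarrow> 'b \<Rightarrow> real"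
  assumes fin: "finite A" "finite B" and T: "T \<subseteq> A"
    and nonneg: "\<forall>a\<in>A. \<forall>b\<in>B. 0 \<le> w a b"
    and rows: "\<forall>a\<in>T. (\<Sum>b\<in>B. w a b) = \<alpha>"
    and cols: "\<forall>b\<in>B. (\<Sum>a\<in>A. w a b) \<le> \<beta>"
  shows "real (card T) * \<alpha> \<le> real (card {b\<in>B. \<exists>a\<in>T. 0 < w a b}) * \<beta>"
proof -
  define NT where "NT = {b\<in>B. \<exists>a\<in>T. 0 < w a b}"
  have NT: "NT \<subseteq> B" by (auto simp: NT_def)
  have "w a b = 0" if "a \<in> T" "b \<in> B - NT" for a b
    using that nonneg T unfolding NT_def by force
  then have rows_NT: "(\<Sum>b\<in>B. w a b) = (\<Sum>b\<in>NT. w a b)" if "a \<in> T" for a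
    using that by (intro sum.mono_neutral_right[OF fin(2) NT]) auto
  have "real (card T) * \<alpha> = (\<Sum>a\<in>T. \<Sum>b\<in>B. w a b)" using rows by simp
  also have "\<dots> = (\<Sum>a\<in>T. \<Sum>b\<in>NT. w a b)" using rows_NT by simp
  also have "\<dots> = (\<Sum>b\<in>NT. \<Sum>a\<in>T. w a b)" by (rule sum.swap)
  also have "\<dots> \<le> (\<Sum>b\<in>NT. \<Sum>a\<in>A. w a b)"
    using T fin nonneg NT by (intro sum_mono sum_mono2) auto
  also have "\<dots> \<le> real (card NT) * \<beta>"
    using cols NT sum_bounded_above[of NT "\<lambda>b. \<Sum>a\<in>A. w a b" \<beta>] by auto
  finally show ?thesis by (simp add: NT_def)
qed

lemma nat_ceiling_add_le:
  fixes t a p k :: nat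
  assumes "1 \<le> t" "1 \<le> p" "p \<le> k" "t * k \<le> a * p"
  shows "nat \<lceil>real (k - p) / real p\<rceil> + t \<le> a"
proof -
  have "t * p \<le> a * p" using assms(3,4) mult_le_mono2 order_trans by blast
  then have "t \<le> a" using assms(2) by simp
  have "k - p \<le> t * (k - p)" using assms(1) by simp
  also have "\<dots> = t * k - t * p" by (simp add: diff_mult_distrib2)
  also have "\<dots> \<le> a * p - t * p" using assms(4) by (rule diff_le_mono)
  also have "\<dots> = (a - t) * p" by (simp add: diff_mult_distrib)
  finally have "real (k - p) \<le> real (a - t) * real p" by (metis of_nat_le_iff of_nat_mult)
  then have "real (k - p) / real p \<le> real (a - t)" using assms(2) by (simp add: divide_le_eq)
  then have "nat \<lceil>real (k - p) / real p\<rceil> \<le> a - t" by (simp add: ceiling_le_iff nat_le_iff)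
  with \<open>t \<le> a\<close> show ?thesis by linarith
qed

text \<open>If every element of \<open>A\<close> spreads weight \<open>\<alpha>\<close> over \<open>B\<close>
  and every element of \<open>B\<close> receives at most \<open>\<beta> = p \<alpha> / k\<close>, then a set \<open>T \<subseteq> A\<close> meets at
  least \<open>k |T| / p\<close> elements of \<open>B\<close>, which leaves room for \<open>|T|\<close> of them after removing
  \<open>\<lceil>(k - p) / p\<rceil>\<close> arbitrary ones.\<close>
lemma matching_in_support_avoiding:
  fixes w :: "'a \<Rightarrow> 'b \<Rightarrow> real"
  assumes fin: "finite A" "finite B" "finite R"
    and nonneg: "\<forall>a\<in>A. \<forall>b\<in>B. 0 \<le> w a b"
    and rows: "\<forall>a\<in>A. (\<Sum>b\<in>B. w a b) = \<alpha>"
    and cols: "\<forall>b\<in>B. (\<Sum>a\<in>A. w a b) \<le> \<beta>"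
    and ratio: "real p * \<alpha> = real k * \<beta>" and "0 < \<beta>" and p: "1 \<le> p" "p \<le> k"
    and R: "card R \<le> nat \<lceil>real (k - p) / real p\<rceil>"
  shows "\<exists>f. inj_on f A \<and> f ` A \<subseteq> B - R \<and> (\<forall>a\<in>A. 0 < w a (f a))"
proof -
  define N where "N a = {b\<in>B. 0 < w a b} - R" for a
  have "hall_condition A N"
    unfolding hall_condition_def
  proof (intro allI impI)
    fix T assume T: "T \<subseteq> A"
    define NT where "NT = {b\<in>B. \<exists>a\<in>T. 0 < w a b}"
    show "card T \<le> card (\<Union>(N ` T))"
    proof (cases "T = {}")
      case False
      have "real (card T) * \<alpha> \<le> real (card NT) * \<beta>"
        unfolding NT_def using T rows by (intro card_support_weighted_bound[OF fin(1,2) T nonneg _ cols]) auto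
      then have "real (card T) * (real p * \<alpha>) \<le> real (card NT) * \<beta> * real p"
        by (metis mult.commute mult.left_commute mult_right_mono of_nat_0_le_iff)
      then have "real (card T * k) * \<beta> \<le> real (card NT * p) * \<beta>"
        unfolding ratio by (simp add: algebra_simps)
      then have "card T * k \<le> card NT * p"
        using \<open>0 < \<beta>\<close> by (metis mult_le_cancel_right_pos of_nat_le_iff)
      moreover have "1 \<le> card T" using False T fin(1) by (meson card_0_eq finite_subset less_one not_le)
      ultimately have "nat \<lceil>real (k - p) / real p\<rceil> + card T \<le> card NT"
        using nat_ceiling_add_le p by blast
      moreover have "card NT - card R \<le> card (NT - R)" using fin(3) by (rule diff_card_le_card_Diff)
      moreover have "\<Union>(N ` T) = NT - R" by (auto simp: N_def NT_def)
      ultimately show ?thesis using R by simp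
    qed simp
  qed
  moreover have "\<forall>a\<in>A. finite (N a)" using fin by (simp add: N_def)
  ultimately obtain f where "inj_on f A" "\<forall>a\<in>A. f a \<in> N a"
    using hall_marriage fin(1) by blast
  then show ?thesis by (auto simp: N_def)
qed

section \<open>Lipschitz maps in the \<open>\<ell>\<^sub>1\<close> metric\<close>

text \<open>Points of \<open>\<real>\<^sup>n\<close> are functions \<open>nat \<Rightarrow> real\<close> of which only the coordinates below \<open>n\<close>
  matter: the number of pieces is a variable of the theorem, so it cannot be a type.\<close>

definition l1_dist :: "nat \<Rightarrow> (nat \<Rightarrow> real) \<Rightarrow> (nat \<Rightarrow> real) \<Rightarrow> real" where
  "l1_dist n u v = (\<Sum>j<n. \<bar>u j - v j\<bar>)"

definition unit_cube :: "nat \<Rightarrow> (nat \<Rightarrow> real) set" where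
  "unit_cube n = {x. \<forall>i<n. 0 \<le> x i \<and> x i \<le> 1}"

definition lipschitz_l1 :: "(nat \<Rightarrow> real) set \<Rightarrow> nat \<Rightarrow> real \<Rightarrow> ((nat \<Rightarrow> real) \<Rightarrow> real) \<Rightarrow> bool" where
  "lipschitz_l1 S n K f \<longleftrightarrow> (\<forall>u\<in>S. \<forall>v\<in>S. \<bar>f u - f v\<bar> \<le> K * l1_dist n u v)"

lemma l1_dist_nonneg: "0 \<le> l1_dist n u v"
  by (simp add: l1_dist_def sum_nonneg)

lemma l1_dist_self [simp]: "l1_dist n u u = 0"
  by (simp add: l1_dist_def)

lemma l1_dist_commute: "l1_dist n u v = l1_dist n v u"
  by (simp add: l1_dist_def abs_minus_commute)

lemma l1_dist_triangle: "l1_dist n u w \<le> l1_dist n u v + l1_dist n v w"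
  unfolding l1_dist_def sum.distrib[symmetric] by (intro sum_mono) linarith

lemma abs_diff_le_l1_dist: "j < n \<Longrightarrow> \<bar>u j - v j\<bar> \<le> l1_dist n u v"
  unfolding l1_dist_def by (rule member_le_sum) auto

lemma l1_dist_le_coordwise: "(\<And>j. j < n \<Longrightarrow> \<bar>u j - v j\<bar> \<le> e) \<Longrightarrow> l1_dist n u v \<le> real n * e"
  unfolding l1_dist_def using sum_bounded_above[of "{..<n}" "\<lambda>j. \<bar>u j - v j\<bar>" e] by simp

lemma tendsto_l1_dist_0:
  assumes "\<forall>j<n. (\<lambda>m. X m j) \<longlonglongrightarrow> x j"
  shows "(\<lambda>m. l1_dist n x (X m)) \<longlonglongrightarrow> 0"
proof -
  have "(\<lambda>m. \<Sum>j<n. \<bar>x j - X m j\<bar>) \<longlonglongrightarrow> (\<Sum>j<n. \<bar>x j - x j\<bar>)"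
    using assms by (intro tendsto_intros) auto
  then show ?thesis by (simp add: l1_dist_def)
qed

lemma lipschitz_l1_const: "0 \<le> K \<Longrightarrow> lipschitz_l1 S n K (\<lambda>v. c)"
  unfolding lipschitz_l1_def by (simp add: l1_dist_nonneg)

lemma lipschitz_l1_coord: "j < n \<Longrightarrow> lipschitz_l1 S n 1 (\<lambda>v. v j)"
  unfolding lipschitz_l1_def by (simp add: abs_diff_le_l1_dist)

lemma lipschitz_l1_add:
  "lipschitz_l1 S n K1 f \<Longrightarrow> lipschitz_l1 S n K2 g \<Longrightarrow> lipschitz_l1 S n (K1 + K2) (\<lambda>v. f v + g v)"
  unfolding lipschitz_l1_def distrib_right by (fastforce simp: abs_le_iff)

lemma lipschitz_l1_diff:
  "lipschitz_l1 S n K1 f \<Longrightarrow> lipschitz_l1 S n K2 g \<Longrightarrow> lipschitz_l1 S n (K1 + K2) (\<lambda>v. f v - g v)"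
  unfolding lipschitz_l1_def distrib_right by (fastforce simp: abs_le_iff)

lemma lipschitz_l1_scale: "lipschitz_l1 S n K f \<Longrightarrow> lipschitz_l1 S n (\<bar>c\<bar> * K) (\<lambda>v. c * f v)"
  unfolding lipschitz_l1_def
  by (simp add: abs_mult mult.assoc mult_left_mono right_diff_distrib[symmetric])

lemma lipschitz_l1_max0: "lipschitz_l1 S n K f \<Longrightarrow> lipschitz_l1 S n K (\<lambda>v. max 0 (f v))"
  unfolding lipschitz_l1_def by (smt (verit, best))

lemma lipschitz_l1_sum:
  "finite I \<Longrightarrow> (\<And>i. i \<in> I \<Longrightarrow> lipschitz_l1 S n (K i) (f i))
    \<Longrightarrow> lipschitz_l1 S n (\<Sum>i\<in>I. K i) (\<lambda>v. \<Sum>i\<in>I. f i v)"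
  by (induction I rule: finite_induct) (auto intro: lipschitz_l1_add lipschitz_l1_const)

lemma lipschitz_l1_mult:
  assumes "lipschitz_l1 S n K1 f" "lipschitz_l1 S n K2 g" "\<forall>v\<in>S. \<bar>f v\<bar> \<le> A" "\<forall>v\<in>S. \<bar>g v\<bar> \<le> B"
  shows "lipschitz_l1 S n (B * K1 + A * K2) (\<lambda>v. f v * g v)"
  unfolding lipschitz_l1_def
proof (intro ballI)
  fix u v assume u: "u \<in> S" and v: "v \<in> S"
  have "\<bar>f u * g u - f v * g v\<bar> = \<bar>(f u - f v) * g u + f v * (g u - g v)\<bar>"
    by (simp add: algebra_simps)
  also have "\<dots> \<le> \<bar>f u - f v\<bar> * \<bar>g u\<bar> + \<bar>f v\<bar> * \<bar>g u - g v\<bar>"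
    by (metis abs_mult abs_triangle_ineq)
  also have "\<dots> \<le> (K1 * l1_dist n u v) * B + A * (K2 * l1_dist n u v)"
    using assms u v unfolding lipschitz_l1_def
    by (intro add_mono mult_mono) (auto intro: order_trans[OF abs_ge_zero])
  finally show "\<bar>f u * g u - f v * g v\<bar> \<le> (B * K1 + A * K2) * l1_dist n u v"
    by (simp add: algebra_simps)
qed

lemma lipschitz_l1_divide:
  assumes "lipschitz_l1 S n K1 f" "lipschitz_l1 S n K2 g" "\<forall>v\<in>S. \<bar>f v\<bar> \<le> A" "\<forall>v\<in>S. c \<le> g v" "0 < c"
  shows "lipschitz_l1 S n (K1 / c + A * K2 / c\<^sup>2) (\<lambda>v. f v / g v)"
  unfolding lipschitz_l1_def
proof (intro ballI)
  fix u v assume u: "u \<in> S" and v: "v \<in> S"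
  have gu: "c \<le> g u" and gv: "c \<le> g v" using assms u v by auto
  then have gpos: "0 < g u" "0 < g v" using assms(5) by auto
  have "\<bar>f u / g u - f v / g v\<bar> = \<bar>(f u - f v) / g u + f v * (g v - g u) / (g u * g v)\<bar>"
    using gpos by (simp add: field_simps)
  also have "\<dots> \<le> \<bar>(f u - f v) / g u\<bar> + \<bar>f v * (g v - g u) / (g u * g v)\<bar>"
    by (rule abs_triangle_ineq)
  also have "\<dots> = \<bar>f u - f v\<bar> / g u + \<bar>f v\<bar> * \<bar>g v - g u\<bar> / (g u * g v)"
    using gpos by (simp add: abs_mult)
  also have "\<dots> \<le> (K1 * l1_dist n u v) / c + A * (K2 * l1_dist n u v) / c\<^sup>2"
  proof (rule add_mono)
    show "\<bar>f u - f v\<bar> / g u \<le> K1 * l1_dist n u v / c"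
      using assms(1,5) u v gu by (intro frac_le) (auto simp: lipschitz_l1_def intro: order_trans[OF abs_ge_zero])
    have num: "\<bar>f v\<bar> * \<bar>g v - g u\<bar> \<le> A * (K2 * l1_dist n u v)"
      using assms u v unfolding lipschitz_l1_def by (intro mult_mono) (auto simp: abs_minus_commute)
    then have "0 \<le> A * (K2 * l1_dist n u v)" by (meson abs_ge_zero mult_nonneg_nonneg order_trans)
    moreover have "c\<^sup>2 \<le> g u * g v" using gu gv assms(5) by (simp add: power2_eq_square mult_mono')
    ultimately show "\<bar>f v\<bar> * \<bar>g v - g u\<bar> / (g u * g v) \<le> A * (K2 * l1_dist n u v) / c\<^sup>2"
      using num assms(5) by (intro frac_le) auto
  qed
  finally show "\<bar>f u / g u - f v / g v\<bar> \<le> (K1 / c + A * K2 / c\<^sup>2) * l1_dist n u v"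
    by (simp add: algebra_simps)
qed

lemma bounded_convergent_subseq_finite:
  fixes X :: "nat \<Rightarrow> 'a \<Rightarrow> real"
  assumes "finite I" "\<forall>m. \<forall>i\<in>I. \<bar>X m i\<bar> \<le> B"
  shows "\<exists>r L. strict_mono r \<and> (\<forall>i\<in>I. (\<lambda>m. X (r m) i) \<longlonglongrightarrow> L i)"
  using assms
proof (induction I rule: finite_induct)
  case empty
  then show ?case using strict_mono_id by blast
next
  case (insert a I)
  then obtain r L where r: "strict_mono r" "\<forall>i\<in>I. (\<lambda>m. X (r m) i) \<longlonglongrightarrow> L i" by auto
  have "Bseq (\<lambda>m. X (r m) a)" using insert.prems by (intro BseqI'[of _ B]) auto
  then obtain s where s: "strict_mono s" "monoseq (\<lambda>m. X (r (s m)) a)"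
    using seq_monosub[of "\<lambda>m. X (r m) a"] by (auto simp: o_def)
  moreover have "Bseq (\<lambda>m. X (r (s m)) a)" using insert.prems by (intro BseqI'[of _ B]) auto
  ultimately obtain la where la: "(\<lambda>m. X (r (s m)) a) \<longlonglongrightarrow> la"
    using Bseq_monoseq_convergent convergent_def by blast
  have "\<forall>i\<in>insert a I. (\<lambda>m. X ((r \<circ> s) m) i) \<longlonglongrightarrow> (L(a := la)) i"
    using la r(2) LIMSEQ_subseq_LIMSEQ[OF _ s(1)] by (auto simp: o_def)
  then show ?case using strict_mono_o[OF r(1) s(1)] by blast
qed

lemma bounded_convergent_subseq_two:
  fixes V :: "nat \<Rightarrow> 'a \<Rightarrow> real" and W :: "nat \<Rightarrow> 'b \<Rightarrow> real"
  assumes "finite I" "finite J" "\<forall>m. \<forall>a\<in>I. \<bar>V m a\<bar> \<le> B" "\<forall>m. \<forall>b\<in>J. \<bar>W m b\<bar> \<le> B"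
  obtains r v w where "strict_mono r" "\<forall>a\<in>I. (\<lambda>m. V (r m) a) \<longlonglongrightarrow> v a" "\<forall>b\<in>J. (\<lambda>m. W (r m) b) \<longlonglongrightarrow> w b"
proof -
  have "\<forall>m. \<forall>x\<in>Inl ` I \<union> Inr ` J. \<bar>case_sum (V m) (W m) x\<bar> \<le> B" using assms(3,4) by auto
  then obtain r L where "strict_mono r"
    and L: "\<forall>x\<in>Inl ` I \<union> Inr ` J. (\<lambda>m. case_sum (V (r m)) (W (r m)) x) \<longlonglongrightarrow> L x"
    using bounded_convergent_subseq_finite[of "Inl ` I \<union> Inr ` J" "\<lambda>m. case_sum (V m) (W m)" B] assms(1,2)
    by auto
  moreover have "\<forall>a\<in>I. (\<lambda>m. V (r m) a) \<longlonglongrightarrow> L (Inl a)"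
  proof
    fix a assume "a \<in> I"
    then have "Inl a \<in> Inl ` I \<union> Inr ` J" by blast
    then show "(\<lambda>m. V (r m) a) \<longlonglongrightarrow> L (Inl a)" using L[rule_format, of "Inl a"] by simp
  qed
  moreover have "\<forall>b\<in>J. (\<lambda>m. W (r m) b) \<longlonglongrightarrow> L (Inr b)"
  proof
    fix b assume "b \<in> J"
    then have "Inr b \<in> Inl ` I \<union> Inr ` J" by blast
    then show "(\<lambda>m. W (r m) b) \<longlonglongrightarrow> L (Inr b)" using L[rule_format, of "Inr b"] by simp
  qed
  ultimately show ?thesis using that[of r "\<lambda>a. L (Inl a)" "\<lambda>b. L (Inr b)"] by blast
qed

section \<open>Brouwer's fixed point theorem for the cube and the simplex\<close>

definition grid_point :: "nat \<Rightarrow> (nat \<Rightarrow> nat) \<Rightarrow> nat \<Rightarrow> real" where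
  "grid_point p x j = real (x j) / real p"

lemma grid_point_in_unit_cube: "0 < p \<Longrightarrow> \<forall>j<N. x j \<le> p \<Longrightarrow> grid_point p x \<in> unit_cube N"
  by (auto simp: grid_point_def unit_cube_def divide_le_eq_1)

lemma grid_cell_estimate:
  assumes L: "\<forall>i<N. lipschitz_l1 (unit_cube N) N K (\<lambda>x. f x i)" and "0 \<le> K" and "0 < p"
    and q: "\<forall>j<N. q j < p" and r: "\<forall>j<N. q j \<le> r j \<and> r j \<le> q j + 1"
    and s: "\<forall>j<N. q j \<le> s j \<and> s j \<le> q j + 1" and "i < N"
    and up: "grid_point p r i \<le> f (grid_point p r) i" and down: "f (grid_point p s) i \<le> grid_point p s i"
  shows "\<bar>f (grid_point p q) i - grid_point p q i\<bar> \<le> (K * N + 1) / p"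
proof -
  let ?z = "grid_point p q"
  have z: "?z \<in> unit_cube N" using q \<open>0 < p\<close> by (intro grid_point_in_unit_cube) (auto intro: less_imp_le)
  have corner: "\<bar>f (grid_point p x) i - f ?z i\<bar> \<le> K * (N / p)"
      "?z i \<le> grid_point p x i" "grid_point p x i \<le> ?z i + 1 / p"
    if x: "\<forall>j<N. q j \<le> x j \<and> x j \<le> q j + 1" for x
  proof -
    have near: "?z j \<le> grid_point p x j \<and> grid_point p x j \<le> ?z j + 1 / p" if "j < N" for j
    proof -
      have "q j \<le> x j" "x j \<le> q j + 1" using x that by auto
      then have "real (q j) \<le> real (x j)" "real (x j) \<le> real (q j) + 1"
        by (metis of_nat_le_iff, metis of_nat_1 of_nat_add of_nat_le_iff)
      then show ?thesis
        using \<open>0 < p\<close> by (auto simp: grid_point_def divide_right_mono add_divide_distrib[symmetric])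
    qed
    then show "?z i \<le> grid_point p x i" "grid_point p x i \<le> ?z i + 1 / p" using \<open>i < N\<close> by auto
    have "\<forall>j<N. x j \<le> p" using q x by (metis Suc_eq_plus1 Suc_leI le_trans)
    then have "grid_point p x \<in> unit_cube N" by (rule grid_point_in_unit_cube[OF \<open>0 < p\<close>])
    then have "\<bar>f (grid_point p x) i - f ?z i\<bar> \<le> K * l1_dist N (grid_point p x) ?z"
      using L \<open>i < N\<close> z unfolding lipschitz_l1_def by blast
    also have "\<dots> \<le> K * (N * (1 / p))"
    proof (intro mult_left_mono l1_dist_le_coordwise \<open>0 \<le> K\<close>)
      fix j assume "j < N"
      then show "\<bar>grid_point p x j - ?z j\<bar> \<le> 1 / p" using near[OF \<open>j < N\<close>] by (simp add: abs_le_iff)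
    qed
    finally show "\<bar>f (grid_point p x) i - f ?z i\<bar> \<le> K * (N / p)" by simp
  qed
  have "?z i - K * (N / p) \<le> f ?z i" "f ?z i \<le> ?z i + 1 / p + K * (N / p)"
    using corner[OF r] corner[OF s] up down by (simp_all add: abs_le_iff)
  moreover have "K * (N / p) + 1 / p = (K * N + 1) / p" by (simp add: add_divide_distrib)
  moreover have "0 \<le> 1 / real p" by simp
  ultimately show ?thesis unfolding abs_le_iff by linarith
qed

text \<open>Brouwer's theorem for Lipschitz self-maps of the cube, up to \<open>\<delta>\<close>: on the grid of mesh \<open>1/p\<close>
  label each coordinate of a point by whether \<open>f\<close> moves it up or down; Kuhn's lemma gives a grid cell
  on which every coordinate changes label, and \<open>grid_cell_estimate\<close> applies at its corner.\<close>
lemma cube_approx_fixpoint: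
  fixes f :: "(nat \<Rightarrow> real) \<Rightarrow> (nat \<Rightarrow> real)"
  assumes "0 < N" and into: "\<forall>x\<in>unit_cube N. f x \<in> unit_cube N"
    and L: "\<forall>i<N. lipschitz_l1 (unit_cube N) N K (\<lambda>x. f x i)" and "0 \<le> K" and "0 < \<delta>"
  shows "\<exists>z\<in>unit_cube N. \<forall>i<N. \<bar>f z i - z i\<bar> \<le> \<delta>"
proof -
  obtain p :: nat where p: "(K * N + 1) / \<delta> \<le> real p" using real_arch_simple by blast
  have "0 < (K * N + 1) / \<delta>" using assms by (simp add: add_nonneg_pos)
  then have p0: "0 < p" using p by linarith
  have "K * N + 1 \<le> real p * \<delta>" using p \<open>0 < \<delta>\<close> by (simp add: divide_le_eq)
  then have err: "(K * N + 1) / p \<le> \<delta>" using p0 by (simp add: divide_le_eq mult.commute)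
  define label :: "(nat \<Rightarrow> nat) \<Rightarrow> nat \<Rightarrow> nat" where
    "label x i = (if x i \<noteq> p \<and> grid_point p x i \<le> f (grid_point p x) i then 0 else 1)" for x i
  have label_range: "\<forall>x. (\<forall>i<N. x i \<le> p) \<longrightarrow> (\<forall>i<N. label x i = 0 \<or> label x i = 1)"
    and label_top: "\<forall>x. (\<forall>i<N. x i \<le> p) \<longrightarrow> (\<forall>i<N. x i = p \<longrightarrow> label x i = 1)"
    by (simp_all add: label_def)
  have label_bottom: "\<forall>x. (\<forall>i<N. x i \<le> p) \<longrightarrow> (\<forall>i<N. x i = 0 \<longrightarrow> label x i = 0)"
  proof (intro allI impI)
    fix x i assume x: "\<forall>i<N. x i \<le> p" and "i < N" "x i = 0"
    have "f (grid_point p x) \<in> unit_cube N" using into grid_point_in_unit_cube[OF p0 x] by blast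
    then show "label x i = 0" using \<open>i < N\<close> \<open>x i = 0\<close> p0 by (simp add: label_def grid_point_def unit_cube_def)
  qed
  have label_1: "f (grid_point p x) i \<le> grid_point p x i"
    if "label x i = 1" "\<forall>j<N. q j \<le> x j \<and> x j \<le> q j + 1" "\<forall>j<N. q j < p" "i < N" for x q i
  proof (cases "x i = p")
    case True
    have "\<forall>j<N. x j \<le> p" using that(2,3) by (metis Suc_eq_plus1 Suc_leI le_trans)
    then have "f (grid_point p x) \<in> unit_cube N" using into grid_point_in_unit_cube[OF p0] by blast
    then show ?thesis using True that(4) p0 by (simp add: unit_cube_def grid_point_def)
  qed (use that(1) in \<open>simp add: label_def split: if_splits\<close>)
  obtain q where q: "\<forall>i<N. q i < p"
    and cell: "\<forall>i<N. \<exists>r s. (\<forall>j<N. q j \<le> r j \<and> r j \<le> q j + 1) \<and> (\<forall>j<N. q j \<le> s j \<and> s j \<le> q j + 1)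
       \<and> label r i \<noteq> label s i"
    using kuhn_lemma[OF p0 label_range label_bottom label_top] by blast
  have "\<bar>f (grid_point p q) i - grid_point p q i\<bar> \<le> \<delta>" if i: "i < N" for i
  proof -
    obtain r s where r: "\<forall>j<N. q j \<le> r j \<and> r j \<le> q j + 1" and s: "\<forall>j<N. q j \<le> s j \<and> s j \<le> q j + 1"
      and "label r i \<noteq> label s i"
      using cell i by blast
    then consider "label r i = 0" "label s i = 1" | "label s i = 0" "label r i = 1"
      by (auto simp: label_def split: if_splits)
    then have "\<bar>f (grid_point p q) i - grid_point p q i\<bar> \<le> (K * N + 1) / p"
    proof cases
      case 1
      then show ?thesis using grid_cell_estimate[OF L \<open>0 \<le> K\<close> p0 q r s i] label_1[OF _ s q i]
        by (simp add: label_def split: if_splits)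
    next
      case 2
      then show ?thesis using grid_cell_estimate[OF L \<open>0 \<le> K\<close> p0 q s r i] label_1[OF _ r q i]
        by (simp add: label_def split: if_splits)
    qed
    then show ?thesis using err by linarith
  qed
  moreover have "grid_point p q \<in> unit_cube N"
    using q p0 by (intro grid_point_in_unit_cube) (auto intro: less_imp_le)
  ultimately show ?thesis by blast
qed

lemma cube_fixpoint:
  fixes f :: "(nat \<Rightarrow> real) \<Rightarrow> (nat \<Rightarrow> real)"
  assumes into: "\<forall>x\<in>unit_cube N. f x \<in> unit_cube N"
    and L: "\<forall>i<N. lipschitz_l1 (unit_cube N) N K (\<lambda>x. f x i)" and "0 \<le> K"
  shows "\<exists>z\<in>unit_cube N. \<forall>i<N. f z i = z i"
proof (cases "N = 0")
  case True
  then show ?thesis by (auto simp: unit_cube_def)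
next
  case False
  have "\<exists>z. z \<in> unit_cube N \<and> (\<forall>i<N. \<bar>f z i - z i\<bar> \<le> inverse (real (Suc m)))" for m
  proof -
    have "0 < inverse (real (Suc m))" by simp
    then show ?thesis using cube_approx_fixpoint[OF _ into L \<open>0 \<le> K\<close>] False by blast
  qed
  then have "\<forall>m. \<exists>z. z \<in> unit_cube N \<and> (\<forall>i<N. \<bar>f z i - z i\<bar> \<le> inverse (real (Suc m)))" by blast
  then obtain Z where Z: "\<And>m. Z m \<in> unit_cube N"
    and Zfix: "\<And>m i. i < N \<Longrightarrow> \<bar>f (Z m) i - Z m i\<bar> \<le> inverse (real (Suc m))"
    unfolding choice_iff by blast
  have "\<forall>m. \<forall>i\<in>{..<N}. \<bar>Z m i\<bar> \<le> 1" using Z by (auto simp: unit_cube_def)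
  then obtain r z where r: "strict_mono r" and lim: "\<forall>i<N. (\<lambda>m. Z (r m) i) \<longlonglongrightarrow> z i"
    using bounded_convergent_subseq_finite[of "{..<N}" Z 1] by (metis finite_lessThan lessThan_iff)
  have z: "z \<in> unit_cube N"
    using Z lim by (auto simp: unit_cube_def intro: LIMSEQ_le_const LIMSEQ_le_const2)
  have "f z i = z i" if i: "i < N" for i
  proof -
    define g where "g m = K * l1_dist N z (Z (r m)) + inverse (real (Suc (r m))) + \<bar>Z (r m) i - z i\<bar>" for m
    have "(\<lambda>m. inverse (real (Suc (r m)))) \<longlonglongrightarrow> 0"
      using LIMSEQ_subseq_LIMSEQ[OF LIMSEQ_inverse_real_of_nat r] by (simp add: o_def)
    moreover have "(\<lambda>m. \<bar>Z (r m) i - z i\<bar>) \<longlonglongrightarrow> 0"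
      using lim i by (metis LIM_zero tendsto_rabs_zero)
    ultimately have "g \<longlonglongrightarrow> K * 0 + 0 + 0"
      unfolding g_def using lim by (intro tendsto_intros tendsto_l1_dist_0) auto
    moreover have "\<bar>f z i - z i\<bar> \<le> g m" for m
    proof -
      have "\<bar>f z i - f (Z (r m)) i\<bar> \<le> K * l1_dist N z (Z (r m))"
        using L i z Z[of "r m"] unfolding lipschitz_l1_def by blast
      then show ?thesis using Zfix[OF i, of "r m"] unfolding g_def by linarith
    qed
    ultimately have "\<bar>f z i - z i\<bar> \<le> 0" by (intro LIMSEQ_le_const[of g]) auto
    then show ?thesis by simp
  qed
  then show ?thesis using z by blast
qed

definition std_simplex :: "nat \<Rightarrow> (nat \<Rightarrow> real) set" where
  "std_simplex n = {v. (\<forall>j<n. 0 \<le> v j) \<and> (\<Sum>j<n. v j) = 1}"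

lemma std_simplex_coord_le_1:
  assumes "v \<in> std_simplex n" "j < n"
  shows "0 \<le> v j \<and> v j \<le> 1"
proof -
  have "v j \<le> (\<Sum>l<n. v l)" using assms by (intro member_le_sum) (auto simp: std_simplex_def)
  then show ?thesis using assms by (simp add: std_simplex_def)
qed

lemma std_simplex_limit:
  assumes "\<forall>m. V m \<in> std_simplex n" "\<forall>j<n. (\<lambda>m. V m j) \<longlonglongrightarrow> z j"
  shows "z \<in> std_simplex n"
proof -
  have "(\<lambda>m. \<Sum>j<n. V m j) \<longlonglongrightarrow> (\<Sum>j<n. z j)" using assms(2) by (intro tendsto_sum) auto
  then have "(\<Sum>j<n. z j) = 1" using assms(1) by (simp add: std_simplex_def LIMSEQ_const_iff)
  moreover have "0 \<le> z j" if "j < n" for j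
  proof (rule LIMSEQ_le_const)
    show "(\<lambda>m. V m j) \<longlonglongrightarrow> z j" using assms(2) that by blast
    show "\<exists>N. \<forall>m\<ge>N. 0 \<le> V m j" using assms(1) that by (simp add: std_simplex_def)
  qed
  ultimately show ?thesis by (simp add: std_simplex_def)
qed

text \<open>A point \<open>u\<close> of the \<open>(n - 1)\<close>-cube, read as cut positions in arbitrary order, gives the division
  of \<open>[0, 1]\<close> with cuts at the running maxima \<open>max (u 0) \<dots> (u i)\<close>. Composing with partial sums
  turns a self-map of the simplex into a self-map of the cube with the same fixed points.\<close>

primrec running_max :: "(nat \<Rightarrow> real) \<Rightarrow> nat \<Rightarrow> real" where
  "running_max u 0 = u 0"
| "running_max u (Suc i) = max (running_max u i) (u (Suc i))"

definition cut_point :: "nat \<Rightarrow> (nat \<Rightarrow> real) \<Rightarrow> nat \<Rightarrow> real" where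
  "cut_point n u i = (if n \<le> Suc i then 1 else running_max u i)"

definition cut_lengths :: "nat \<Rightarrow> (nat \<Rightarrow> real) \<Rightarrow> nat \<Rightarrow> real" where
  "cut_lengths n u j = (if j = 0 then cut_point n u 0 else cut_point n u j - cut_point n u (j - 1))"

definition partial_sum :: "(nat \<Rightarrow> real) \<Rightarrow> nat \<Rightarrow> real" where
  "partial_sum y i = (\<Sum>j\<le>i. y j)"

lemma running_max_bounds: "u \<in> unit_cube N \<Longrightarrow> i < N \<Longrightarrow> 0 \<le> running_max u i \<and> running_max u i \<le> 1"
  by (induction i) (auto simp: unit_cube_def)

lemma cut_point_nonneg: "u \<in> unit_cube (n - 1) \<Longrightarrow> 0 \<le> cut_point n u i"
  using running_max_bounds[of u "n - 1" i] by (simp add: cut_point_def)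

lemma cut_point_mono: "u \<in> unit_cube (n - 1) \<Longrightarrow> cut_point n u i \<le> cut_point n u (Suc i)"
  using running_max_bounds[of u "n - 1" i] by (simp add: cut_point_def)

lemma abs_running_max_diff_le: "\<bar>running_max u i - running_max w i\<bar> \<le> (\<Sum>j\<le>i. \<bar>u j - w j\<bar>)"
proof (induction i)
  case (Suc i)
  have "\<bar>running_max u (Suc i) - running_max w (Suc i)\<bar>
      \<le> \<bar>running_max u i - running_max w i\<bar> + \<bar>u (Suc i) - w (Suc i)\<bar>"
    by (simp add: max_def abs_if)
  with Suc show ?case by simp
qed simp

lemma abs_cut_point_diff_le: "\<bar>cut_point n u i - cut_point n w i\<bar> \<le> l1_dist (n - 1) u w"
proof (cases "n \<le> Suc i")
  case False
  then have "\<bar>cut_point n u i - cut_point n w i\<bar> \<le> (\<Sum>j\<le>i. \<bar>u j - w j\<bar>)"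
    using abs_running_max_diff_le by (simp add: cut_point_def)
  also have "\<dots> \<le> l1_dist (n - 1) u w"
    using False unfolding l1_dist_def by (intro sum_mono2) auto
  finally show ?thesis .
qed (simp add: cut_point_def l1_dist_nonneg)

lemma abs_cut_lengths_diff_le: "\<bar>cut_lengths n u j - cut_lengths n w j\<bar> \<le> 2 * l1_dist (n - 1) u w"
proof (cases j)
  case 0
  then show ?thesis
    using abs_cut_point_diff_le[of n u 0 w] l1_dist_nonneg[of "n - 1" u w] by (simp add: cut_lengths_def)
next
  case (Suc i)
  then show ?thesis
    using abs_cut_point_diff_le[of n u j w] abs_cut_point_diff_le[of n u i w] by (simp add: cut_lengths_def)
qed

lemma partial_sum_cut_lengths: "partial_sum (cut_lengths n u) i = cut_point n u i"
  by (induction i) (auto simp: partial_sum_def cut_lengths_def)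

lemma cut_lengths_in_std_simplex:
  assumes "1 \<le> n" "u \<in> unit_cube (n - 1)"
  shows "cut_lengths n u \<in> std_simplex n"
proof -
  have "0 \<le> cut_lengths n u j" for j
    using cut_point_nonneg[OF assms(2)] cut_point_mono[OF assms(2)]
    by (cases j) (auto simp: cut_lengths_def)
  moreover have "{..<n} = {..n - 1}" using assms(1) by auto
  then have "(\<Sum>j<n. cut_lengths n u j) = 1"
    using assms(1) partial_sum_cut_lengths[of n u "n - 1"] by (simp add: partial_sum_def cut_point_def)
  ultimately show ?thesis by (simp add: std_simplex_def)
qed

lemma abs_partial_sum_diff_le: "i < n \<Longrightarrow> \<bar>partial_sum y i - partial_sum y' i\<bar> \<le> l1_dist n y y'"
  unfolding partial_sum_def l1_dist_def sum_subtractf[symmetric]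
  by (rule order_trans[OF sum_abs sum_mono2]) auto

lemma eq_cut_lengths_if_partial_sums:
  assumes "1 \<le> n" and y: "y \<in> std_simplex n" and u: "\<forall>i<n - 1. partial_sum y i = u i"
  shows "\<forall>j<n. y j = cut_lengths n u j"
proof -
  have running_max_eq: "running_max u i = u i" if "i < n - 1" for i
    using that
  proof (induction i)
    case (Suc i)
    have "u (Suc i) = partial_sum y (Suc i)" "u i = partial_sum y i" using u Suc.prems by auto
    then have "u (Suc i) = u i + y (Suc i)" by (simp add: partial_sum_def)
    moreover have "0 \<le> y (Suc i)" using y Suc.prems by (simp add: std_simplex_def)
    ultimately show ?case using Suc by simp
  qed simp
  have sums: "partial_sum y i = partial_sum (cut_lengths n u) i" if "i < n" for i
  proof (cases "n \<le> Suc i")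
    case True
    then have "{..i} = {..<n}" using that by auto
    then have "partial_sum y i = 1" using y by (simp add: partial_sum_def std_simplex_def)
    moreover have "partial_sum (cut_lengths n u) i = 1" using True by (simp add: partial_sum_cut_lengths cut_point_def)
    ultimately show ?thesis by simp
  next
    case False
    then show ?thesis using u running_max_eq by (simp add: partial_sum_cut_lengths cut_point_def)
  qed
  show ?thesis
  proof (intro allI impI)
    fix j assume "j < n"
    then show "y j = cut_lengths n u j"
    proof (cases j)
      case (Suc i)
      then show ?thesis using sums[OF \<open>j < n\<close>] sums[of i] \<open>j < n\<close>
        by (simp add: partial_sum_def cut_lengths_def)
    qed (use sums[of 0] in \<open>simp add: partial_sum_def\<close>)
  qed
qed

lemma simplex_fixpoint:
  fixes G :: "(nat \<Rightarrow> real) \<Rightarrow> (nat \<Rightarrow> real)"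
  assumes n: "1 \<le> n" and into: "\<forall>v\<in>std_simplex n. G v \<in> std_simplex n"
    and L: "\<forall>j<n. lipschitz_l1 (std_simplex n) n K (\<lambda>v. G v j)" and K: "0 \<le> K"
  shows "\<exists>v\<in>std_simplex n. \<forall>j<n. G v j = v j"
proof -
  define H where "H u i = partial_sum (G (cut_lengths n u)) i" for u i
  have D: "cut_lengths n u \<in> std_simplex n" if "u \<in> unit_cube (n - 1)" for u
    using cut_lengths_in_std_simplex n that by blast
  have "H u \<in> unit_cube (n - 1)" if u: "u \<in> unit_cube (n - 1)" for u
  proof -
    have y: "G (cut_lengths n u) \<in> std_simplex n" using into D[OF u] by blast
    have "0 \<le> H u i \<and> H u i \<le> 1" if "i < n - 1" for i
    proof
      show "0 \<le> H u i" using y that by (auto simp: H_def partial_sum_def std_simplex_def intro!: sum_nonneg)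
      have "H u i \<le> (\<Sum>j<n. G (cut_lengths n u) j)"
        unfolding H_def partial_sum_def using y that by (intro sum_mono2) (auto simp: std_simplex_def)
      then show "H u i \<le> 1" using y by (simp add: std_simplex_def)
    qed
    then show ?thesis by (simp add: unit_cube_def)
  qed
  moreover have "lipschitz_l1 (unit_cube (n - 1)) (n - 1) (real n * K * (real n * 2)) (\<lambda>u. H u i)"
    if i: "i < n - 1" for i
    unfolding lipschitz_l1_def
  proof (intro ballI)
    fix u w assume u: "u \<in> unit_cube (n - 1)" and w: "w \<in> unit_cube (n - 1)"
    have "\<bar>H u i - H w i\<bar> \<le> l1_dist n (G (cut_lengths n u)) (G (cut_lengths n w))"
      unfolding H_def using i by (intro abs_partial_sum_diff_le) simp
    also have "\<dots> \<le> real n * (K * l1_dist n (cut_lengths n u) (cut_lengths n w))"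
      using L D[OF u] D[OF w] by (intro l1_dist_le_coordwise) (simp add: lipschitz_l1_def)
    also have "\<dots> \<le> real n * (K * (real n * (2 * l1_dist (n - 1) u w)))"
      using K abs_cut_lengths_diff_le l1_dist_le_coordwise by (simp add: mult_left_mono)
    finally show "\<bar>H u i - H w i\<bar> \<le> real n * K * (real n * 2) * l1_dist (n - 1) u w"
      by (simp add: mult_ac)
  qed
  moreover have "0 \<le> real n * K * (real n * 2)" using K by simp
  ultimately obtain u where u: "u \<in> unit_cube (n - 1)" "\<forall>i<n - 1. H u i = u i"
    using cube_fixpoint[of "n - 1" H] by blast
  then have "\<forall>j<n. G (cut_lengths n u) j = cut_lengths n u j"
    using eq_cut_lengths_if_partial_sums[OF n, of "G (cut_lengths n u)" u] into D by (simp add: H_def)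
  then show ?thesis using D[OF u(1)] by blast
qed

text \<open>If the shortfalls of \<open>w\<close> below the constant \<open>b\<close> are proportional to \<open>v\<close>, they vanish: a
  shortfall only occurs where \<open>v\<close> is positive, and there \<open>w\<close> alone would have to carry a total mass
  exceeding \<open>1\<close>.\<close>
lemma eq_barycentre_if_shortfall_proportional:
  fixes v w :: "nat \<Rightarrow> real"
  assumes w: "w \<in> std_simplex n" and b: "(\<Sum>j<n. b) = 1"
    and face: "\<forall>j<n. v j = 0 \<longrightarrow> w j = 0"
    and shortfall: "\<forall>j<n. v j * (\<Sum>l<n. max 0 (b - w l)) = max 0 (b - w j)"
  shows "\<forall>j<n. w j = b"
proof -
  let ?s = "\<Sum>l<n. max 0 (b - w l)"
  have "?s = 0"
  proof (rule ccontr)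
    assume "?s \<noteq> 0"
    then have "0 < ?s" by (simp add: sum_nonneg order_less_le)
    define J where "J = {j. j < n \<and> w j < b}"
    have J: "J \<subseteq> {..<n}" by (auto simp: J_def)
    have "w j = 0" if "j < n" "j \<notin> J" for j
    proof -
      have "max 0 (b - w j) = 0" using that by (auto simp: J_def max_def)
      then have "v j * ?s = 0" using shortfall that(1) by simp
      then have "v j = 0" using \<open>0 < ?s\<close> by simp
      then show ?thesis using face that(1) by blast
    qed
    then have "(\<Sum>j<n. w j) = (\<Sum>j\<in>J. w j)"
      using J by (intro sum.mono_neutral_right) auto
    also have "\<dots> < (\<Sum>j\<in>J. b)"
    proof (rule sum_strict_mono)
      show "finite J" using J finite_subset by blast
      show "J \<noteq> {}"
      proof
        assume "J = {}"
        then have "max 0 (b - w l) = 0" if "l < n" for l using that by (auto simp: J_def max_def)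
        then show False using \<open>?s \<noteq> 0\<close> by simp
      qed
    qed (simp add: J_def)
    also have "\<dots> \<le> (\<Sum>j<n. b)"
    proof (intro sum_mono2 J)
      have "real n * b = 1" using b by simp
      then show "0 \<le> b" if "j \<in> {..<n} - J" for j by (smt (verit) mult_nonneg_nonpos of_nat_0_le_iff)
    qed simp
    finally show False using w b by (simp add: std_simplex_def)
  qed
  have ge: "b \<le> w j" if "j < n" for j
  proof -
    have "max 0 (b - w j) = 0" using shortfall \<open>?s = 0\<close> that by simp
    then show ?thesis by (simp add: max_def split: if_splits)
  qed
  show ?thesis
  proof (intro allI impI)
    fix j assume "j < n"
    show "w j = b"
    proof (rule ccontr)
      assume "w j \<noteq> b"
      then have "(\<Sum>l<n. b) < (\<Sum>l<n. w l)"
        using ge \<open>j < n\<close> by (intro sum_strict_mono_ex1) force+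
      then show False using w b by (simp add: std_simplex_def)
    qed
  qed
qed

text \<open>The map \<open>G\<close> pushes mass towards the coordinates where \<open>F v\<close> falls short of the barycentre; a
  fixed point of \<open>G\<close> has shortfalls proportional to \<open>v\<close>.\<close>
lemma face_preserving_map_hits_barycentre:
  fixes F :: "(nat \<Rightarrow> real) \<Rightarrow> (nat \<Rightarrow> real)"
  assumes n: "1 \<le> n" and into: "\<forall>v\<in>std_simplex n. F v \<in> std_simplex n"
    and L: "\<forall>j<n. lipschitz_l1 (std_simplex n) n K (\<lambda>v. F v j)" and K: "0 \<le> K"
    and face: "\<forall>v\<in>std_simplex n. \<forall>j<n. v j = 0 \<longrightarrow> F v j = 0"
  shows "\<exists>v\<in>std_simplex n. \<forall>j<n. F v j = 1 / n"
proof -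
  define b where "b = 1 / real n"
  have b: "0 < b" "(\<Sum>j<n. b) = 1" using n by (auto simp: b_def)
  define s where "s v = (\<Sum>l<n. max 0 (b - F v l))" for v
  define G where "G v j = (v j + max 0 (b - F v j)) / (1 + s v)" for v j
  have s0: "0 \<le> s v" for v by (simp add: s_def sum_nonneg)
  have "G v \<in> std_simplex n" if v: "v \<in> std_simplex n" for v
  proof -
    have "(\<Sum>j<n. G v j) = (\<Sum>j<n. v j + max 0 (b - F v j)) / (1 + s v)"
      by (simp add: G_def sum_divide_distrib)
    also have "\<dots> = 1" using v s0[of v] by (simp add: sum.distrib std_simplex_def s_def)
    finally show ?thesis using v s0[of v] by (auto simp: std_simplex_def G_def)
  qed
  moreover have "lipschitz_l1 (std_simplex n) n ((1 + K) / 1 + (1 + b) * (real n * K) / 1\<^sup>2) (\<lambda>v. G v j)"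
    if j: "j < n" for j
    unfolding G_def
  proof (rule lipschitz_l1_divide)
    have F: "lipschitz_l1 (std_simplex n) n (0 + K) (\<lambda>v. b - F v l)" if "l < n" for l
      using L that by (intro lipschitz_l1_diff lipschitz_l1_const) auto
    show "lipschitz_l1 (std_simplex n) n (1 + K) (\<lambda>v. v j + max 0 (b - F v j))"
      using j F[OF j] by (intro lipschitz_l1_add lipschitz_l1_coord lipschitz_l1_max0) auto
    have "lipschitz_l1 (std_simplex n) n (0 + (\<Sum>l<n. K)) (\<lambda>v. 1 + s v)"
      unfolding s_def using F by (intro lipschitz_l1_add lipschitz_l1_const lipschitz_l1_sum lipschitz_l1_max0) auto
    then show "lipschitz_l1 (std_simplex n) n (real n * K) (\<lambda>v. 1 + s v)" by simp
    show "\<forall>v\<in>std_simplex n. \<bar>v j + max 0 (b - F v j)\<bar> \<le> 1 + b"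
    proof
      fix v assume v: "v \<in> std_simplex n"
      then have "F v \<in> std_simplex n" using into by blast
      then have "0 \<le> v j" "v j \<le> 1" "0 \<le> F v j" using std_simplex_coord_le_1 v j by blast+
      then show "\<bar>v j + max 0 (b - F v j)\<bar> \<le> 1 + b" using b(1) by auto
    qed
  qed (use s0 in auto)
  moreover have "0 \<le> (1 + K) / 1 + (1 + b) * (real n * K) / 1\<^sup>2" using K b by simp
  ultimately obtain v where v: "v \<in> std_simplex n" "\<forall>j<n. G v j = v j"
    using simplex_fixpoint[OF n] by blast
  have "v j * s v = max 0 (b - F v j)" if "j < n" for j
    using v(2) that s0[of v] by (simp add: G_def divide_eq_eq algebra_simps)
  then have "\<forall>j<n. F v j = b"
    using eq_barycentre_if_shortfall_proportional[of "F v" n b v] into face v(1) b(2)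
    by (simp add: s_def)
  then show ?thesis using v(1) by (auto simp: b_def)
qed

lemma std_simplex_positive_lower_bound:
  fixes f :: "(nat \<Rightarrow> real) \<Rightarrow> real"
  assumes L: "lipschitz_l1 (std_simplex n) n K f" and pos: "\<forall>v\<in>std_simplex n. 0 < f v"
  shows "\<exists>c>0. \<forall>v\<in>std_simplex n. c \<le> f v"
proof (rule ccontr)
  assume no_bound: "\<not> ?thesis"
  then have small: "\<forall>c>0. \<exists>v\<in>std_simplex n. f v < c" by (auto simp: not_le)
  have "\<forall>m. \<exists>v. v \<in> std_simplex n \<and> f v < inverse (real (Suc m))"
  proof
    fix m
    show "\<exists>v. v \<in> std_simplex n \<and> f v < inverse (real (Suc m))"
      using small[rule_format, of "inverse (real (Suc m))"] by auto
  qed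
  then obtain V where V: "\<And>m. V m \<in> std_simplex n" "\<And>m. f (V m) < inverse (real (Suc m))"
    unfolding choice_iff by blast
  have "\<forall>m. \<forall>j\<in>{..<n}. \<bar>V m j\<bar> \<le> 1"
    using std_simplex_coord_le_1[OF V(1)] by (simp add: abs_le_iff)
  then obtain r z where r: "strict_mono r" and lim: "\<forall>j<n. (\<lambda>m. V (r m) j) \<longlonglongrightarrow> z j"
    using bounded_convergent_subseq_finite[of "{..<n}" V 1] by (metis finite_lessThan lessThan_iff)
  have z: "z \<in> std_simplex n" using V(1) lim by (intro std_simplex_limit[of "\<lambda>m. V (r m)"]) auto
  have "(\<lambda>m. inverse (real (Suc (r m))) + K * l1_dist n z (V (r m))) \<longlonglongrightarrow> 0 + K * 0"
    using LIMSEQ_subseq_LIMSEQ[OF LIMSEQ_inverse_real_of_nat r] lim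
    by (intro tendsto_intros tendsto_l1_dist_0) (auto simp: o_def)
  moreover have "f z \<le> inverse (real (Suc (r m))) + K * l1_dist n z (V (r m))" for m
  proof -
    have "\<bar>f z - f (V (r m))\<bar> \<le> K * l1_dist n z (V (r m))"
      using L z V(1) unfolding lipschitz_l1_def by blast
    then show ?thesis using V(2)[of "r m"] by linarith
  qed
  ultimately have "f z \<le> 0" by (intro LIMSEQ_le_const) auto
  then show False using pos z by fastforce
qed

section \<open>Fractional envy-free divisions\<close>

text \<open>The distance to the empty set is taken to be \<open>1\<close>, so that the soft demands below vanish on an
  empty preference region.\<close>
definition l1_setdist :: "nat \<Rightarrow> (nat \<Rightarrow> real) set \<Rightarrow> (nat \<Rightarrow> real) \<Rightarrow> real" where
  "l1_setdist n A v = (if A = {} then 1 else (INF y\<in>A. l1_dist n v y))"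

lemma l1_setdist_nonneg: "0 \<le> l1_setdist n A v"
  unfolding l1_setdist_def by (auto intro!: cINF_greatest simp: l1_dist_nonneg)

lemma l1_setdist_le: "y \<in> A \<Longrightarrow> l1_setdist n A v \<le> l1_dist n v y"
  unfolding l1_setdist_def by (auto intro!: cINF_lower bdd_belowI2[of _ 0] simp: l1_dist_nonneg)

lemma l1_setdist_eq_0: "v \<in> A \<Longrightarrow> l1_setdist n A v = 0"
  using l1_setdist_le[of v A n v] l1_setdist_nonneg[of n A v] by simp

lemma l1_setdist_approx:
  assumes "A \<noteq> {}" "0 < e"
  obtains y where "y \<in> A" "l1_dist n v y < l1_setdist n A v + e"
  using cInf_lessD[of "(\<lambda>y. l1_dist n v y) ` A" "l1_setdist n A v + e"] assms
  by (auto simp: l1_setdist_def)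

lemma lipschitz_l1_setdist: "lipschitz_l1 S n 1 (l1_setdist n A)"
proof -
  have le: "l1_setdist n A v \<le> l1_setdist n A w + l1_dist n v w" for v w
  proof (cases "A = {}")
    case False
    have "l1_setdist n A v - l1_dist n v w \<le> l1_dist n w y" if "y \<in> A" for y
      using l1_setdist_le[OF that, of n v] l1_dist_triangle[of n v y w] by simp
    then have "l1_setdist n A v - l1_dist n v w \<le> (INF y\<in>A. l1_dist n w y)"
      using False by (intro cINF_greatest) auto
    then show ?thesis using False by (simp add: l1_setdist_def)
  qed (simp add: l1_setdist_def l1_dist_nonneg)
  show ?thesis
    unfolding lipschitz_l1_def
  proof (intro ballI)
    fix u v
    show "\<bar>l1_setdist n A u - l1_setdist n A v\<bar> \<le> 1 * l1_dist n u v"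
      using le[of u v] le[of v u] l1_dist_commute[of n u v] unfolding abs_le_iff by linarith
  qed
qed

lemma l1_setdist_tendsto_0_imp_approx:
  assumes dist: "(\<lambda>m. l1_setdist n A (V m)) \<longlonglongrightarrow> 0"
  obtains Y where "\<And>m. Y m \<in> A" "(\<lambda>m. l1_dist n (V m) (Y m)) \<longlonglongrightarrow> 0"
proof -
  have "A \<noteq> {}"
  proof
    assume "A = {}"
    then have "(\<lambda>m. 1::real) \<longlonglongrightarrow> 0" using dist by (simp add: l1_setdist_def)
    then show False using LIMSEQ_unique tendsto_const by fastforce
  qed
  have "\<forall>m. \<exists>y. y \<in> A \<and> l1_dist n (V m) y < l1_setdist n A (V m) + inverse (real (Suc m))"
  proof
    fix m
    have "0 < inverse (real (Suc m))" by simp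
    then obtain y where "y \<in> A" "l1_dist n (V m) y < l1_setdist n A (V m) + inverse (real (Suc m))"
      using l1_setdist_approx[OF \<open>A \<noteq> {}\<close>] by blast
    then show "\<exists>y. y \<in> A \<and> l1_dist n (V m) y < l1_setdist n A (V m) + inverse (real (Suc m))"
      by blast
  qed
  then obtain Y where Y: "\<And>m. Y m \<in> A"
    and near: "\<And>m. l1_dist n (V m) (Y m) < l1_setdist n A (V m) + inverse (real (Suc m))"
    unfolding choice_iff by blast
  have "(\<lambda>m. l1_setdist n A (V m) + inverse (real (Suc m))) \<longlonglongrightarrow> 0"
    using tendsto_add[OF dist LIMSEQ_inverse_real_of_nat] by simp
  then have "(\<lambda>m. l1_dist n (V m) (Y m)) \<longlonglongrightarrow> 0"
  proof (rule tendsto_sandwich[of "\<lambda>_. 0", rotated 3])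
    show "\<forall>\<^sub>F m in sequentially. 0 \<le> l1_dist n (V m) (Y m)"
      by (simp add: l1_dist_nonneg)
    show "\<forall>\<^sub>F m in sequentially. l1_dist n (V m) (Y m) \<le> l1_setdist n A (V m) + inverse (real (Suc m))"
      using near by (simp add: less_imp_le)
  qed simp
  then show ?thesis using that Y by blast
qed

definition list_of_vec :: "nat \<Rightarrow> (nat \<Rightarrow> real) \<Rightarrow> real list" where
  "list_of_vec n v = map v [0..<n]"

lemma nth_list_of_vec [simp]: "l < n \<Longrightarrow> list_of_vec n v ! l = v l"
  by (simp add: list_of_vec_def)

lemma division_list_of_vec_iff: "division n (list_of_vec n v) \<longleftrightarrow> v \<in> std_simplex n"
proof -
  have "sum_list (list_of_vec n v) = (\<Sum>j<n. v j)"
    by (simp add: list_of_vec_def sum_list_sum_nth atLeast0LessThan)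
  then show ?thesis by (auto simp: division_def std_simplex_def list_of_vec_def)
qed

definition pref_region :: "(nat \<Rightarrow> real list \<Rightarrow> nat set) \<Rightarrow> nat \<Rightarrow> nat \<Rightarrow> nat \<Rightarrow> (nat \<Rightarrow> real) set" where
  "pref_region pref n i j = {v \<in> std_simplex n. j \<in> pref i (list_of_vec n v)}"

lemma mem_pref_region_if_setdist_tendsto_0:
  assumes ci: "cake_instance k pref" and "i < k" and z: "z \<in> std_simplex n"
    and V: "\<forall>l<n. (\<lambda>m. V m l) \<longlonglongrightarrow> z l"
    and dist: "(\<lambda>m. l1_setdist n (pref_region pref n i j) (V m)) \<longlonglongrightarrow> 0"
  shows "j \<in> pref i (list_of_vec n z)"
proof -
  obtain Y where Y: "\<And>m. Y m \<in> pref_region pref n i j" and near: "(\<lambda>m. l1_dist n (V m) (Y m)) \<longlonglongrightarrow> 0"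
    using l1_setdist_tendsto_0_imp_approx[OF dist] by blast
  have lim: "(\<lambda>m. list_of_vec n (Y m) ! l) \<longlonglongrightarrow> list_of_vec n z ! l" if l: "l < n" for l
  proof -
    have "\<bar>Y m l - V m l\<bar> \<le> l1_dist n (V m) (Y m)" for m
      using abs_diff_le_l1_dist[OF l, of "V m" "Y m"] by (simp add: abs_minus_commute)
    then have "(\<lambda>m. Y m l - V m l) \<longlonglongrightarrow> 0"
      by (intro Lim_null_comparison[OF _ near] always_eventually) simp
    from tendsto_add[OF this V[rule_format, OF l]] show ?thesis using l by simp
  qed
  have closed: "\<forall>n X x j. (\<forall>m. division n (X m)) \<longrightarrow> division n x \<longrightarrow>
      (\<forall>l<n. (\<lambda>m. X m ! l) \<longlonglongrightarrow> x ! l) \<longrightarrow> (\<forall>m. j \<in> pref i (X m)) \<longrightarrow> j \<in> pref i x"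
    using ci \<open>i < k\<close> unfolding cake_instance_def by blast
  have "\<forall>m. division n (list_of_vec n (Y m))" "\<forall>m. j \<in> pref i (list_of_vec n (Y m))"
    using Y by (auto simp: pref_region_def division_list_of_vec_iff)
  moreover have "division n (list_of_vec n z)" using z by (simp add: division_list_of_vec_iff)
  ultimately show ?thesis
    using closed[rule_format, of n "\<lambda>m. list_of_vec n (Y m)" "list_of_vec n z" j] lim by blast
qed

text \<open>A Lipschitz substitute for ``\<open>v j\<close> if player \<open>i\<close> prefers piece \<open>j\<close> of \<open>v\<close>, else 0'': it is
  exact on the preference region and vanishes at \<open>\<ell>\<^sub>1\<close>-distance \<open>1 / m\<close> from it.\<close>
definition soft_demand :: "(nat \<Rightarrow> real list \<Rightarrow> nat set) \<Rightarrow> nat \<Rightarrow> nat \<Rightarrow> nat \<Rightarrow> nat \<Rightarrow> (nat \<Rightarrow> real) \<Rightarrow> real" where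
  "soft_demand pref n m i j v = v j * max 0 (1 - real m * l1_setdist n (pref_region pref n i j) v)"

definition demand_share :: "(nat \<Rightarrow> real list \<Rightarrow> nat set) \<Rightarrow> nat \<Rightarrow> nat \<Rightarrow> nat \<Rightarrow> nat \<Rightarrow> (nat \<Rightarrow> real) \<Rightarrow> real" where
  "demand_share pref n m i j v = soft_demand pref n m i j v / (\<Sum>l<n. soft_demand pref n m i l v)"

lemma soft_demand_bounds:
  assumes "v \<in> std_simplex n" "j < n"
  shows "0 \<le> soft_demand pref n m i j v \<and> soft_demand pref n m i j v \<le> v j"
proof -
  let ?w = "max 0 (1 - real m * l1_setdist n (pref_region pref n i j) v)"
  have "0 \<le> ?w" "?w \<le> 1" using l1_setdist_nonneg[of n "pref_region pref n i j" v] by auto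
  moreover have "0 \<le> v j" using std_simplex_coord_le_1[OF assms] by blast
  ultimately show ?thesis unfolding soft_demand_def by (simp add: mult_left_le)
qed

lemma lipschitz_soft_demand:
  assumes "j < n"
  shows "lipschitz_l1 (std_simplex n) n (1 * 1 + 1 * (0 + \<bar>real m\<bar> * 1)) (soft_demand pref n m i j)"
proof -
  have "\<forall>v\<in>std_simplex n. \<bar>v j\<bar> \<le> 1" using assms std_simplex_coord_le_1 by fastforce
  moreover have "\<bar>max 0 (1 - real m * l1_setdist n (pref_region pref n i j) v)\<bar> \<le> 1" for v
    using l1_setdist_nonneg[of n "pref_region pref n i j" v] by (simp add: abs_le_iff)
  ultimately show ?thesis
    unfolding soft_demand_def[abs_def] using assms
    by (intro lipschitz_l1_mult lipschitz_l1_coord lipschitz_l1_max0 lipschitz_l1_diff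
        lipschitz_l1_const lipschitz_l1_scale lipschitz_l1_setdist) auto
qed

lemma total_soft_demand_pos:
  assumes ci: "cake_instance k pref" and "i < k" "1 \<le> m" and v: "v \<in> std_simplex n"
  shows "0 < (\<Sum>l<n. soft_demand pref n m i l v)"
proof -
  have div: "division n (list_of_vec n v)" using v division_list_of_vec_iff by blast
  then obtain j where j: "j \<in> pref i (list_of_vec n v)" "0 < list_of_vec n v ! j"
    using ci \<open>i < k\<close> unfolding cake_instance_def by blast
  then have "j < n" using ci \<open>i < k\<close> div unfolding cake_instance_def by blast
  then have "0 < soft_demand pref n m i j v"
    using j v by (simp add: soft_demand_def l1_setdist_eq_0 pref_region_def)
  also have "\<dots> \<le> (\<Sum>l<n. soft_demand pref n m i l v)"
    using \<open>j < n\<close> soft_demand_bounds[OF v] by (intro member_le_sum) auto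
  finally show ?thesis .
qed

lemma demand_share_row:
  assumes "cake_instance k pref" "i < k" "1 \<le> m" "v \<in> std_simplex n"
  shows "(\<Sum>j<n. demand_share pref n m i j v) = 1"
    and "j < n \<Longrightarrow> 0 \<le> demand_share pref n m i j v \<and> demand_share pref n m i j v \<le> 1"
proof -
  note pos = total_soft_demand_pos[OF assms]
  show "(\<Sum>j<n. demand_share pref n m i j v) = 1"
    using pos by (simp add: demand_share_def sum_divide_distrib[symmetric])
  assume "j < n"
  then have "soft_demand pref n m i j v \<le> (\<Sum>l<n. soft_demand pref n m i l v)"
    using soft_demand_bounds[OF assms(4)] by (intro member_le_sum) auto
  then show "0 \<le> demand_share pref n m i j v \<and> demand_share pref n m i j v \<le> 1"
    using pos soft_demand_bounds[OF assms(4) \<open>j < n\<close>] by (simp add: demand_share_def)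
qed

lemma demand_share_pos_imp_near:
  assumes "0 < demand_share pref n m i j v"
  shows "real m * l1_setdist n (pref_region pref n i j) v < 1"
proof -
  have "soft_demand pref n m i j v \<noteq> 0" using assms by (auto simp: demand_share_def)
  then have "max 0 (1 - real m * l1_setdist n (pref_region pref n i j) v) \<noteq> 0"
    by (auto simp: soft_demand_def)
  then show ?thesis by (simp add: max_def split: if_splits)
qed

lemma lipschitz_demand_share:
  assumes "cake_instance k pref" "i < k" "1 \<le> m"
  shows "\<exists>K\<ge>0. \<forall>j<n. lipschitz_l1 (std_simplex n) n K (demand_share pref n m i j)"
proof -
  let ?Ks = "1 * 1 + 1 * (0 + \<bar>real m\<bar> * 1)"
  have total: "lipschitz_l1 (std_simplex n) n (\<Sum>l<n. ?Ks) (\<lambda>v. \<Sum>l<n. soft_demand pref n m i l v)"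
    by (intro lipschitz_l1_sum lipschitz_soft_demand) auto
  obtain c where c: "0 < c" "\<forall>v\<in>std_simplex n. c \<le> (\<Sum>l<n. soft_demand pref n m i l v)"
    using std_simplex_positive_lower_bound[OF total] total_soft_demand_pos[OF assms] by blast
  have "lipschitz_l1 (std_simplex n) n (?Ks / c + 1 * (\<Sum>l<n. ?Ks) / c\<^sup>2) (demand_share pref n m i j)"
    if "j < n" for j
  proof -
    have "\<bar>soft_demand pref n m i j v\<bar> \<le> 1" if "v \<in> std_simplex n" for v
      using soft_demand_bounds[OF that \<open>j < n\<close>, of pref m i] std_simplex_coord_le_1[OF that \<open>j < n\<close>]
      by simp
    then show ?thesis
      unfolding demand_share_def[abs_def] using c
      by (intro lipschitz_l1_divide[OF lipschitz_soft_demand[OF \<open>j < n\<close>] total]) auto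
  qed
  moreover have "0 \<le> ?Ks / c + 1 * (\<Sum>l<n. ?Ks) / c\<^sup>2" using c by simp
  ultimately show ?thesis by blast
qed


lemma approx_fractional_division:
  assumes ci: "cake_instance k pref" and P: "finite P" "P \<noteq> {}" "P \<subseteq> {..<k}"
    and n: "1 \<le> n" and m: "1 \<le> m"
  shows "\<exists>v\<in>std_simplex n. \<forall>j<n. (\<Sum>i\<in>P. demand_share pref n m i j v) = real (card P) / real n"
proof -
  have "\<forall>i\<in>P. \<exists>K\<ge>0. \<forall>j<n. lipschitz_l1 (std_simplex n) n K (demand_share pref n m i j)"
    using lipschitz_demand_share[OF ci _ m] P(3) by blast
  then obtain K where K: "\<forall>i\<in>P. 0 \<le> K i \<and> (\<forall>j<n. lipschitz_l1 (std_simplex n) n (K i) (demand_share pref n m i j))"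
    by (metis bchoice)
  have cP: "0 < real (card P)" using P by (simp add: card_gt_0_iff)
  define F where "F v j = 1 / real (card P) * (\<Sum>i\<in>P. demand_share pref n m i j v)" for v j
  have "F v \<in> std_simplex n" if v: "v \<in> std_simplex n" for v
  proof -
    have "0 \<le> F v j" if "j < n" for j
    proof -
      have "0 \<le> (\<Sum>i\<in>P. demand_share pref n m i j v)"
        using demand_share_row(2)[OF ci _ m v that] P(3) by (intro sum_nonneg) auto
      then show ?thesis by (simp add: F_def)
    qed
    moreover have "(\<Sum>j<n. F v j) = 1 / real (card P) * (\<Sum>i\<in>P. \<Sum>j<n. demand_share pref n m i j v)"
      by (simp add: F_def sum_distrib_left sum.swap[of _ P])
    moreover have "(\<Sum>i\<in>P. \<Sum>j<n. demand_share pref n m i j v) = (\<Sum>i\<in>P. 1)"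
      using demand_share_row(1)[OF ci _ m v] P(3) by (intro sum.cong) auto
    ultimately show ?thesis using cP by (simp add: std_simplex_def)
  qed
  moreover have "lipschitz_l1 (std_simplex n) n (\<bar>1 / real (card P)\<bar> * (\<Sum>i\<in>P. K i)) (\<lambda>v. F v j)"
    if "j < n" for j
    unfolding F_def using K that by (intro lipschitz_l1_scale lipschitz_l1_sum[OF P(1)]) auto
  moreover have "0 \<le> \<bar>1 / real (card P)\<bar> * (\<Sum>i\<in>P. K i)" using K by (simp add: sum_nonneg)
  moreover have "\<forall>v\<in>std_simplex n. \<forall>j<n. v j = 0 \<longrightarrow> F v j = 0"
    by (simp add: F_def demand_share_def soft_demand_def)
  ultimately obtain v where v: "v \<in> std_simplex n" "\<forall>j<n. F v j = 1 / real n"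
    using face_preserving_map_hits_barycentre[OF n] by blast
  have "(\<Sum>i\<in>P. demand_share pref n m i j v) = real (card P) / real n" if "j < n" for j
  proof -
    have "1 / real (card P) * (\<Sum>i\<in>P. demand_share pref n m i j v) = 1 / real n"
      using v(2) that by (simp add: F_def)
    then show ?thesis using cP by (simp add: field_simps)
  qed
  then show ?thesis using v(1) by blast
qed

lemma pref_if_limit_share_pos:
  assumes ci: "cake_instance k pref" and "i < k" and z: "z \<in> std_simplex n"
    and V: "\<forall>l<n. (\<lambda>m. V m l) \<longlonglongrightarrow> z l" and \<mu>: "\<forall>m. Suc m \<le> \<mu> m"
    and share: "(\<lambda>m. demand_share pref n (\<mu> m) i j (V m)) \<longlonglongrightarrow> w" and "0 < w"
  shows "j \<in> pref i (list_of_vec n z)"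
proof (rule mem_pref_region_if_setdist_tendsto_0[OF ci \<open>i < k\<close> z V])
  let ?d = "\<lambda>m. l1_setdist n (pref_region pref n i j) (V m)"
  have "\<forall>\<^sub>F m in sequentially. 0 < demand_share pref n (\<mu> m) i j (V m)"
    using order_tendstoD(1)[OF share \<open>0 < w\<close>] .
  then have "\<forall>\<^sub>F m in sequentially. ?d m \<le> inverse (real (Suc m))"
  proof (rule eventually_mono)
    fix m assume "0 < demand_share pref n (\<mu> m) i j (V m)"
    then have "real (\<mu> m) * ?d m < 1" by (rule demand_share_pos_imp_near)
    moreover have "real (Suc m) \<le> real (\<mu> m)" using \<mu>[rule_format, of m] by (simp only: of_nat_le_iff)
    ultimately have "real (Suc m) * ?d m \<le> 1"
      using l1_setdist_nonneg by (smt (verit) mult_right_mono)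
    then show "?d m \<le> inverse (real (Suc m))" by (simp add: field_simps)
  qed
  then show "?d \<longlonglongrightarrow> 0"
  proof (rule tendsto_sandwich[of "\<lambda>_. 0", rotated 1])
    show "\<forall>\<^sub>F m in sequentially. 0 \<le> ?d m" by (simp add: l1_setdist_nonneg)
  qed (simp, rule LIMSEQ_inverse_real_of_nat)
qed

text \<open>The divisions and shares of \<open>approx_fractional_division\<close> for growing \<open>m\<close> have a convergent
  subsequence; in the limit the shares only charge pieces that are preferred.\<close>
lemma fractional_envy_free_division:
  assumes ci: "cake_instance k pref" and P: "finite P" "P \<noteq> {}" "P \<subseteq> {..<k}" and n: "1 \<le> n"
  obtains x w where "division n x" "\<forall>i\<in>P. \<forall>j<n. 0 \<le> w i j" "\<forall>i\<in>P. (\<Sum>j<n. w i j) = 1"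
    "\<forall>j<n. (\<Sum>i\<in>P. w i j) = real (card P) / real n" "\<forall>i\<in>P. \<forall>j<n. 0 < w i j \<longrightarrow> j \<in> pref i x"
proof -
  have "\<forall>m. \<exists>v\<in>std_simplex n. \<forall>j<n. (\<Sum>i\<in>P. demand_share pref n (Suc m) i j v) = real (card P) / real n"
    using approx_fractional_division[OF ci P n] by simp
  then obtain V where V: "\<And>m. V m \<in> std_simplex n"
    and cols: "\<And>m j. j < n \<Longrightarrow> (\<Sum>i\<in>P. demand_share pref n (Suc m) i j (V m)) = real (card P) / real n"
    by (metis bchoice)
  define W where "W m i j = demand_share pref n (Suc m) i j (V m)" for m i j
  have W01: "0 \<le> W m i j \<and> W m i j \<le> 1" if "i \<in> P" "j < n" for m i j
    using demand_share_row(2)[OF ci _ _ V] that P(3) by (auto simp: W_def)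
  have rows: "(\<Sum>j<n. W m i j) = 1" if "i \<in> P" for m i
    using demand_share_row(1)[OF ci _ _ V] that P(3) by (auto simp: W_def)
  have "\<forall>m. \<forall>j\<in>{..<n}. \<bar>V m j\<bar> \<le> 1" using std_simplex_coord_le_1[OF V] by auto
  moreover have "\<forall>m. \<forall>ij\<in>P \<times> {..<n}. \<bar>case_prod (W m) ij\<bar> \<le> 1" using W01 by auto
  ultimately obtain r z w' where r: "strict_mono r" and Vlim0: "\<forall>j\<in>{..<n}. (\<lambda>m. V (r m) j) \<longlonglongrightarrow> z j"
    and W'lim: "\<forall>ij\<in>P \<times> {..<n}. (\<lambda>m. case_prod (W (r m)) ij) \<longlonglongrightarrow> w' ij"
    by (rule bounded_convergent_subseq_two[OF finite_lessThan finite_cartesian_product[OF P(1) finite_lessThan]])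
  have Vlim: "\<forall>j<n. (\<lambda>m. V (r m) j) \<longlonglongrightarrow> z j" using Vlim0 by simp
  define w where "w i j = w' (i, j)" for i j
  have Wlim: "(\<lambda>m. W (r m) i j) \<longlonglongrightarrow> w i j" if "i \<in> P" "j < n" for i j
    using W'lim that by (auto simp: w_def)
  have z: "z \<in> std_simplex n" using V Vlim by (intro std_simplex_limit[of "\<lambda>m. V (r m)"]) auto
  have "0 \<le> w i j" if "i \<in> P" "j < n" for i j
  proof (rule LIMSEQ_le_const[OF Wlim[OF that]])
    show "\<exists>N. \<forall>m\<ge>N. 0 \<le> W (r m) i j" using W01[OF that] by blast
  qed
  moreover have "(\<Sum>j<n. w i j) = 1" if "i \<in> P" for i
  proof -
    have "(\<lambda>m. \<Sum>j<n. W (r m) i j) \<longlonglongrightarrow> (\<Sum>j<n. w i j)" using Wlim[OF that] by (intro tendsto_sum) auto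
    then show ?thesis using rows[OF that] by (simp add: LIMSEQ_const_iff)
  qed
  moreover have "(\<Sum>i\<in>P. w i j) = real (card P) / real n" if "j < n" for j
  proof -
    have "(\<lambda>m. \<Sum>i\<in>P. W (r m) i j) \<longlonglongrightarrow> (\<Sum>i\<in>P. w i j)" using Wlim that by (intro tendsto_sum) auto
    then show ?thesis using cols[OF that] by (simp add: W_def LIMSEQ_const_iff)
  qed
  moreover have "j \<in> pref i (list_of_vec n z)" if "i \<in> P" "j < n" "0 < w i j" for i j
  proof (rule pref_if_limit_share_pos[OF ci _ z Vlim])
    show "i < k" using that(1) P(3) by blast
    show "\<forall>m. Suc m \<le> Suc (r m)" using seq_suble[OF r] by simp
    show "(\<lambda>m. demand_share pref n (Suc (r m)) i j (V (r m))) \<longlonglongrightarrow> w i j"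
      using Wlim[OF that(1,2)] by (simp add: W_def)
  qed (rule that(3))
  moreover have "division n (list_of_vec n z)" using z by (simp add: division_list_of_vec_iff)
  ultimately show ?thesis using that by blast
qed


section \<open>Envy-free assignments after deletions\<close>

lemma division_envy_free_for_any_removed_pieces:
  assumes ci: "cake_instance k pref" and S: "S \<subseteq> {..<k}" "card S = p" and p: "1 \<le> p" "p \<le> k"
  shows "\<exists>x. division k x \<and>
    (\<forall>R. R \<subseteq> {..<k} \<and> card R = nat \<lceil>real (k - p) / real p\<rceil> \<longrightarrow>
      (\<exists>f. inj_on f S \<and> f ` S \<subseteq> {..<k} - R \<and> (\<forall>i\<in>S. f i \<in> pref i x)))"
proof -
  have "finite S" using S(1) finite_subset by blast
  moreover have "S \<noteq> {}" using S(2) p(1) by auto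
  moreover have "1 \<le> k" using p by linarith
  ultimately obtain x w where x: "division k x" and w: "\<forall>i\<in>S. \<forall>j<k. 0 \<le> w i j" "\<forall>i\<in>S. (\<Sum>j<k. w i j) = 1"
      "\<forall>j<k. (\<Sum>i\<in>S. w i j) = real (card S) / real k" "\<forall>i\<in>S. \<forall>j<k. 0 < w i j \<longrightarrow> j \<in> pref i x"
    using fractional_envy_free_division[OF ci _ _ S(1)] by blast
  have "\<exists>f. inj_on f S \<and> f ` S \<subseteq> {..<k} - R \<and> (\<forall>i\<in>S. f i \<in> pref i x)"
    if R: "R \<subseteq> {..<k}" "card R = nat \<lceil>real (k - p) / real p\<rceil>" for R
  proof -
    have nonneg: "\<forall>i\<in>S. \<forall>j\<in>{..<k}. 0 \<le> w i j"
      and cols: "\<forall>j\<in>{..<k}. (\<Sum>i\<in>S. w i j) \<le> real p / real k"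
      using w(1,3) S(2) by simp_all
    have "real p * 1 = real k * (real p / real k)" "0 < real p / real k" using p by auto
    from matching_in_support_avoiding[where w = w and \<alpha> = 1 and \<beta> = "real p / real k" and p = p and k = k,
        OF \<open>finite S\<close> finite_lessThan finite_subset[OF R(1) finite_lessThan] nonneg w(2) cols this p]
    obtain f where "inj_on f S" "f ` S \<subseteq> {..<k} - R" "\<forall>i\<in>S. 0 < w i (f i)"
      using R(2) by auto
    then show ?thesis using w(4) by blast
  qed
  then show ?thesis using x by blast
qed

lemma division_envy_free_for_any_leaving_players:
  assumes ci: "cake_instance k pref" and q: "1 \<le> q" "q \<le> k"
  shows "\<exists>x. division q x \<and>
    (\<forall>L. L \<subseteq> {..<k} \<and> card L = nat \<lceil>real (k - q) / real q\<rceil> \<longrightarrow>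
      (\<exists>g. inj_on g {..<q} \<and> g ` {..<q} \<subseteq> {..<k} - L \<and> (\<forall>j<q. j \<in> pref (g j) x)))"
proof -
  have "0 < k" using q by linarith
  then have "{..<k} \<noteq> {}" by auto
  then obtain x w where x: "division q x" and w: "\<forall>i\<in>{..<k}. \<forall>j<q. 0 \<le> w i j"
      "\<forall>i\<in>{..<k}. (\<Sum>j<q. w i j) = 1" "\<forall>j<q. (\<Sum>i\<in>{..<k}. w i j) = real (card {..<k}) / real q"
      "\<forall>i\<in>{..<k}. \<forall>j<q. 0 < w i j \<longrightarrow> j \<in> pref i x"
    by (rule fractional_envy_free_division[OF ci finite_lessThan _ subset_refl q(1)])
  have "\<exists>g. inj_on g {..<q} \<and> g ` {..<q} \<subseteq> {..<k} - L \<and> (\<forall>j<q. j \<in> pref (g j) x)"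
    if L: "L \<subseteq> {..<k}" "card L = nat \<lceil>real (k - q) / real q\<rceil>" for L
  proof -
    have nonneg: "\<forall>j\<in>{..<q}. \<forall>i\<in>{..<k}. 0 \<le> w i j"
      and rows: "\<forall>j\<in>{..<q}. (\<Sum>i\<in>{..<k}. w i j) = real k / real q"
      and cols: "\<forall>i\<in>{..<k}. (\<Sum>j\<in>{..<q}. w i j) \<le> 1"
      using w(1-3) by simp_all
    have "real q * (real k / real q) = real k * 1" "(0::real) < 1" using q by auto
    from matching_in_support_avoiding[where w = "\<lambda>j i. w i j" and \<alpha> = "real k / real q" and \<beta> = 1
        and p = q and k = k, OF finite_lessThan finite_lessThan finite_subset[OF L(1) finite_lessThan]
        nonneg rows cols this q]
    obtain g where "inj_on g {..<q}" "g ` {..<q} \<subseteq> {..<k} - L" "\<forall>j\<in>{..<q}. 0 < w (g j) j"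
      using L(2) by auto
    then show ?thesis using w(4) by blast
  qed
  then show ?thesis using x by blast
qed

theorem theorem2p3:
  fixes k p q :: nat and pref :: "nat \<Rightarrow> real list \<Rightarrow> nat set"
  assumes "cake_instance k pref"
    and "1 \<le> p" and "p \<le> k" and "1 \<le> q" and "q \<le> k"
  shows "(\<forall>S. S \<subseteq> {..<k} \<and> card S = p \<longrightarrow>
            (\<exists>x. division k x \<and>
              (\<forall>R. R \<subseteq> {..<k} \<and> card R = nat \<lceil>real (k - p) / real p\<rceil> \<longrightarrow>
                 (\<exists>f. inj_on f S \<and> f ` S \<subseteq> {..<k} - R \<and> (\<forall>i\<in>S. f i \<in> pref i x)))))
       \<and> (\<exists>x. division q x \<and>
              (\<forall>L. L \<subseteq> {..<k} \<and> card L = nat \<lceil>real (k - q) / real q\<rceil> \<longrightarrow>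
                 (\<exists>g. inj_on g {..<q} \<and> g ` {..<q} \<subseteq> {..<k} - L \<and>
                      (\<forall>j<q. j \<in> pref (g j) x))))"
  by (intro conjI allI impI division_envy_free_for_any_leaving_players[OF assms(1,4,5)]
      division_envy_free_for_any_removed_pieces[OF assms(1) _ _ assms(2,3)]) simp_all

end
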